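(* Let $R=(r_n)_{n\in\mathbb{N}}$ be an enumerated countably infinite reference set with magnum $\theta_R\in\mathbf{Nn}$, and let $A,B$ be infinite subsets of $R$ with the orderings inherited from $R$. Then $m(B\mid A)=m(A\mid B)$.
   Context: $\mathbb{N}=\{1,2,3,\dots\}$, $\mathbb{N}_0=\mathbb{N}\cup\{0\}$. $\mathbf{No}$ denotes Conway's ordered field of surreal numbers, $\omega$ its first infinite element. An omnific integer is a surreal $x$ with $x=\{x-1\mid x+1\}$; $\mathbf{Nn}$ (surnatural numbers) is the class of nonnegative omnific integers. For $f,g:\mathbb{N}\to\mathbb{N}_0$, $f\overset{\to}{=}g$ means $f(n)=g(n)$ for all $n\ge N$ for some $N$; $f\overset{\to}{<}g$ means $f(n)<g(n)$ for all $n\ge N$ for some $N$. Axiom of Extension (standing assumption): every nondecreasing $f:\mathbb{N}\to\mathbb{N}_0$ has an extension $\hat f:\mathbf{Nn}\to\mathbf{Nn}$ with $\hat f(n)=f(n)$ for $n\in\mathbb{N}$, such that for nondecreasing $f,g$: $f\overset{\to}{=}g\Rightarrow\hat f(\nu)=\hat g(\nu)$ for all $\nu\in\mathbf{Nn}\setminus\mathbb{N}$; $f\overset{\to}{<}g\Rightarrow\hat f(\nu)<\hat g(\nu)$ for all $\nu\in\mathbf{Nn}\setminus\mathbb{N}$; and $\widehat{f+g}=\hat f+\hat g$, $\widehat{f\cdot g}=\hat f\cdot\hat g$, $\widehat{f\circ g}=\hat f\circ\hat g$ where defined. Relative counting: if $S=(s_n)_{n\in\mathbb{N}}$ is an infinite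 enumerated set and $T$ any set, $\chi_{T|S}(n)=1$ if $s_n\in T$ and $0$ otherwise, and $\kappa_{T|S}(n)=\sum_{k=1}^n\chi_{T|S}(k)$. Subsets of $R$ are enumerated in the order inherited from $R$. Set $\theta_A:=\hat{\kappa_{A|R}}(\theta_R)$ and $\theta_B:=\hat{\kappa_{B|R}}(\theta_R)$ (the magnums of $A$, $B$). The magnum of $B$ in $A$ is $m(B\mid A):=\hat{\kappa_{B|A}}(\theta_A)$, and $m(A\mid B):=\hat{\kappa_{A|B}}(\theta_B)$. *)

theory Defs
  imports Main "HOL-Library.Infinite_Set"
begin

text \<open>Functions N -> N0 are modelled as nat => nat; the value at 0 is irrelevant junk.\<close>

definition nondecr :: "(nat \<Rightarrow> nat) \<Rightarrow> bool" where
  "nondecr f \<longleftrightarrow> (\<forall>m n. 1 \<le> m \<longrightarrow> m \<le> n \<longrightarrow> f m \<le> f n)"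

definition ev_eq :: "(nat \<Rightarrow> nat) \<Rightarrow> (nat \<Rightarrow> nat) \<Rightarrow> bool" where
  "ev_eq f g \<longleftrightarrow> (\<exists>N. \<forall>n\<ge>N. f n = g n)"

definition ev_less :: "(nat \<Rightarrow> nat) \<Rightarrow> (nat \<Rightarrow> nat) \<Rightarrow> bool" where
  "ev_less f g \<longleftrightarrow> (\<exists>N. \<forall>n\<ge>N. f n < g n)"

text \<open>The type 'a plays the role of the surnaturals Nn; of_nat embeds N0.
  An element is infinite if it is not (the image of) a natural number.\<close>

definition infinite_nn :: "'a::linordered_semidom \<Rightarrow> bool" where
  "infinite_nn \<nu> \<longleftrightarrow> \<nu> \<notin> range (of_nat :: nat \<Rightarrow> 'a)"

definition axiom_of_extension :: "((nat \<Rightarrow> nat) \<Rightarrow> 'a::linordered_semidom \<Rightarrow> 'a) \<Rightarrow> bool" where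
  "axiom_of_extension ext \<longleftrightarrow>
     (\<forall>f g. (\<forall>n\<ge>1. f n = g n) \<longrightarrow> ext f = ext g) \<and>
     (\<forall>f. nondecr f \<longrightarrow> (\<forall>n\<ge>1. ext f (of_nat n) = of_nat (f n))) \<and>
     (\<forall>f g. nondecr f \<longrightarrow> nondecr g \<longrightarrow> ev_eq f g \<longrightarrow>
        (\<forall>\<nu>. infinite_nn \<nu> \<longrightarrow> ext f \<nu> = ext g \<nu>)) \<and>
     (\<forall>f g. nondecr f \<longrightarrow> nondecr g \<longrightarrow> ev_less f g \<longrightarrow>
        (\<forall>\<nu>. infinite_nn \<nu> \<longrightarrow> ext f \<nu> < ext g \<nu>)) \<and>
     (\<forall>f g. nondecr f \<longrightarrow> nondecr g \<longrightarrow>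
        ext (\<lambda>n. f n + g n) = (\<lambda>\<nu>. ext f \<nu> + ext g \<nu>)) \<and>
     (\<forall>f g. nondecr f \<longrightarrow> nondecr g \<longrightarrow>
        ext (\<lambda>n. f n * g n) = (\<lambda>\<nu>. ext f \<nu> * ext g \<nu>)) \<and>
     (\<forall>f g. nondecr f \<longrightarrow> nondecr g \<longrightarrow> (\<forall>n\<ge>1. g n \<ge> 1) \<longrightarrow>
        ext (f \<circ> g) = ext f \<circ> ext g)"

definition chi :: "(nat \<Rightarrow> 'b) \<Rightarrow> 'b set \<Rightarrow> nat \<Rightarrow> nat" where
  "chi s T n = (if s n \<in> T then 1 else 0)"

definition kappa :: "(nat \<Rightarrow> 'b) \<Rightarrow> 'b set \<Rightarrow> nat \<Rightarrow> nat" where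
  "kappa s T n = (\<Sum>k=1..n. chi s T k)"

text \<open>Enumeration of a subset A of R = (r_n)_{n>=1} in the order inherited from R
  (1-indexed; enumerate is 0-indexed).\<close>

definition sub_enum :: "(nat \<Rightarrow> 'b) \<Rightarrow> 'b set \<Rightarrow> nat \<Rightarrow> 'b" where
  "sub_enum r A n = r (enumerate {k. 1 \<le> k \<and> r k \<in> A} (n - 1))"

definition magnum :: "((nat \<Rightarrow> nat) \<Rightarrow> 'a \<Rightarrow> 'a) \<Rightarrow> (nat \<Rightarrow> 'b) \<Rightarrow> 'a \<Rightarrow> 'b set \<Rightarrow> 'a" where
  "magnum ext r thetaR A = ext (kappa r A) thetaR"

definition rel_magnum :: "((nat \<Rightarrow> nat) \<Rightarrow> 'a \<Rightarrow> 'a) \<Rightarrow> (nat \<Rightarrow> 'b) \<Rightarrow> 'a \<Rightarrow> 'b set \<Rightarrow> 'b set \<Rightarrow> 'a" where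
  "rel_magnum ext r thetaR B A = ext (kappa (sub_enum r A) B) (magnum ext r thetaR A)"

end

theory Submission
  imports Defs
begin

text \<open>Counting the elements of B among the first \<open>\<kappa>_{A|R}(n)\<close> elements of A is the same as
  counting the elements of \<open>A \<inter> B\<close> among the first n elements of R, i.e.
  \<open>\<kappa>_{B|A} \<circ> \<kappa>_{A|R} = \<kappa>_{A\<inter>B|R}\<close>. The extension operator respects composition, so
  \<open>m(B | A) = \<theta>_{A\<inter>B}\<close>, which is symmetric in A and B.\<close>

lemma kappa_0 [simp]: "kappa s T 0 = 0"
  by (simp add: kappa_def)

lemma kappa_Suc: "kappa s T (Suc n) = kappa s T n + chi s T (Suc n)"
  by (simp add: kappa_def)

lemma kappa_mono: "m \<le> n \<Longrightarrow> kappa s T m \<le> kappa s T n"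
  unfolding kappa_def by (rule sum_mono2) auto

lemma nondecr_kappa: "nondecr (kappa s T)"
  by (simp add: nondecr_def kappa_mono)

lemma kappa_eq_card: "kappa s T n = card {k \<in> {k. 1 \<le> k \<and> s k \<in> T}. k < Suc n}"
proof (induction n)
  case 0
  then show ?case by simp
next
  case (Suc n)
  have "{k \<in> {k. 1 \<le> k \<and> s k \<in> T}. k < Suc (Suc n)}
      = (if s (Suc n) \<in> T then insert (Suc n) else id) {k \<in> {k. 1 \<le> k \<and> s k \<in> T}. k < Suc n}"
    by (auto simp: less_Suc_eq)
  then show ?case
    using Suc by (simp add: kappa_Suc chi_def)
qed

lemma kappa_pos:
  assumes "1 \<le> m" "s m \<in> T" "m \<le> n"
  shows "1 \<le> kappa s T n"
proof -
  obtain m' where "m = Suc m'" using assms(1) by (cases m) auto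
  then have "1 \<le> kappa s T m" using assms(2) by (simp add: kappa_Suc chi_def)
  also have "\<dots> \<le> kappa s T n" using assms(3) by (rule kappa_mono)
  finally show ?thesis .
qed

lemma enumerate_card_less:
  fixes S :: "nat set"
  assumes S: "infinite S" and m: "m \<in> S"
  shows "enumerate S (card {k \<in> S. k < m}) = m"
proof -
  obtain j where j: "enumerate S j = m" using enumerate_Ex[OF S m] by blast
  have "{k \<in> S. k < m} = enumerate S ` {..<j}"
  proof
    show "{k \<in> S. k < m} \<subseteq> enumerate S ` {..<j}"
    proof
      fix k assume k: "k \<in> {k \<in> S. k < m}"
      then obtain i where i: "enumerate S i = k" using enumerate_Ex[OF S] by blast
      with k j S have "i < j" by auto
      with i show "k \<in> enumerate S ` {..<j}" by auto
    qed
    show "enumerate S ` {..<j} \<subseteq> {k \<in> S. k < m}"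
      using S j by (auto intro: enumerate_in_set)
  qed
  moreover have "card (enumerate S ` {..<j}) = j"
    using inj_enumerate[OF S] by (simp add: card_image inj_on_subset)
  ultimately show ?thesis using j by simp
qed

lemma infinite_index_set:
  assumes "A \<subseteq> r ` {1..}" and "infinite A"
  shows "infinite {k. 1 \<le> k \<and> r k \<in> A}"
proof -
  have "A \<subseteq> r ` {k. 1 \<le> k \<and> r k \<in> A}" using assms(1) by auto
  then show ?thesis using assms(2) finite_surj by blast
qed

text \<open>An element \<open>r (n + 1) \<in> A\<close> is preceded in A by exactly \<open>\<kappa>_{A|R}(n)\<close> elements.\<close>

lemma sub_enum_Suc_kappa:
  assumes "infinite {k. 1 \<le> k \<and> r k \<in> A}" and "r (Suc n) \<in> A"
  shows "sub_enum r A (Suc (kappa r A n)) = r (Suc n)"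
  using enumerate_card_less[OF assms(1)] assms(2) by (simp add: sub_enum_def kappa_eq_card)

lemma kappa_sub_enum_kappa:
  assumes "infinite {k. 1 \<le> k \<and> r k \<in> A}"
  shows "kappa (sub_enum r A) B (kappa r A n) = kappa r (A \<inter> B) n"
proof (induction n)
  case 0
  then show ?case by simp
next
  case (Suc n)
  then show ?case
    using sub_enum_Suc_kappa[OF assms] by (simp add: kappa_Suc chi_def)
qed

lemma ext_eq_if_ev_eq:
  assumes "axiom_of_extension ext" "nondecr f" "nondecr g" "ev_eq f g" "infinite_nn \<nu>"
  shows "ext f \<nu> = ext g \<nu>"
  using assms unfolding axiom_of_extension_def by blast

lemma ext_comp:
  assumes "axiom_of_extension ext" "nondecr f" "nondecr g" "\<forall>n\<ge>1. 1 \<le> g n"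
  shows "ext (f \<circ> g) = ext f \<circ> ext g"
  using assms unfolding axiom_of_extension_def by blast

text \<open>At infinite arguments the composition rule only needs the inner function to be eventually
  positive: replace \<open>g\<close> by \<open>max 1 \<circ> g\<close>, which is invisible to \<open>ext\<close> there.\<close>

lemma ext_comp_eventually:
  assumes ax: "axiom_of_extension ext"
    and f: "nondecr f" and g: "nondecr g" and h: "nondecr h"
    and g_pos: "\<And>n. N \<le> n \<Longrightarrow> 1 \<le> g n"
    and fg_h: "ev_eq (\<lambda>n. f (g n)) h"
    and \<nu>: "infinite_nn \<nu>"
  shows "ext f (ext g \<nu>) = ext h \<nu>"
proof -
  define g' where "g' n = max 1 (g n)" for n
  have g': "nondecr g'"
    using g unfolding g'_def nondecr_def by (meson max.mono order_refl)
  have fg': "nondecr (f \<circ> g')"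
    using f g' unfolding nondecr_def g'_def by simp
  have "ev_eq g g'"
    unfolding ev_eq_def g'_def using g_pos by (auto simp: max_def)
  then have "ext f (ext g \<nu>) = ext f (ext g' \<nu>)"
    using ext_eq_if_ev_eq[OF ax g g' _ \<nu>] by simp
  also have "\<dots> = ext (f \<circ> g') \<nu>"
    using ext_comp[OF ax f g'] by (simp add: g'_def)
  also have "\<dots> = ext h \<nu>"
  proof (rule ext_eq_if_ev_eq[OF ax fg' h _ \<nu>])
    from fg_h obtain M where "\<forall>n\<ge>M. f (g n) = h n" by (auto simp: ev_eq_def)
    then have "\<forall>n\<ge>max M N. (f \<circ> g') n = h n"
      using g_pos by (simp add: g'_def max_absorb2)
    then show "ev_eq (f \<circ> g') h" unfolding ev_eq_def by blast
  qed
  finally show ?thesis .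
qed

lemma rel_magnum_eq_magnum_Int:
  assumes ax: "axiom_of_extension ext" and \<theta>: "infinite_nn thetaR"
    and "A \<subseteq> r ` {1..}" and "infinite A"
  shows "rel_magnum ext r thetaR B A = magnum ext r thetaR (A \<inter> B)"
proof -
  have S: "infinite {k. 1 \<le> k \<and> r k \<in> A}"
    using assms(3,4) by (rule infinite_index_set)
  then obtain m where m: "1 \<le> m" "r m \<in> A" using not_finite_existsD by blast
  have "ext (kappa (sub_enum r A) B) (ext (kappa r A) thetaR) = ext (kappa r (A \<inter> B)) thetaR"
  proof (rule ext_comp_eventually[OF ax nondecr_kappa nondecr_kappa nondecr_kappa _ _ \<theta>])
    show "\<And>n. m \<le> n \<Longrightarrow> 1 \<le> kappa r A n" using m by (rule kappa_pos)
    show "ev_eq (\<lambda>n. kappa (sub_enum r A) B (kappa r A n)) (kappa r (A \<inter> B))"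
      unfolding ev_eq_def using kappa_sub_enum_kappa[OF S] by simp
  qed
  then show ?thesis by (simp add: rel_magnum_def magnum_def)
qed

theorem theorem7p2:
  fixes ext :: "(nat \<Rightarrow> nat) \<Rightarrow> 'a::linordered_semidom \<Rightarrow> 'a"
    and r :: "nat \<Rightarrow> 'b" and thetaR :: 'a and A B :: "'b set"
  assumes "axiom_of_extension ext"
    and "inj_on r {1..}"
    and "infinite_nn thetaR"
    and "A \<subseteq> r ` {1..}" and "B \<subseteq> r ` {1..}"
    and "infinite A" and "infinite B"
  shows "rel_magnum ext r thetaR B A = rel_magnum ext r thetaR A B"
proof -
  have "rel_magnum ext r thetaR B A = magnum ext r thetaR (A \<inter> B)"
    using assms(1,3,4,6) by (rule rel_magnum_eq_magnum_Int)
  also have "\<dots> = rel_magnum ext r thetaR A B"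
    using rel_magnum_eq_magnum_Int[OF assms(1,3,5,7)] by (simp add: Int_commute)
  finally show ?thesis .
qed

end
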